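(* Let $a_c>b_c>0$, $k_e>0$, $a_e^2=a_c^2+k_e$, $b_e^2=b_c^2+k_e$, let $c$ be the ellipse $x^2/a_c^2+y^2/b_c^2=1$ and $e$ the ellipse $x^2/a_e^2+y^2/b_e^2=1$, with center $O$. Let $P_1P_2\dots P_N$ be an $N$-sided periodic billiard in $e$ with caustic $c$ and turning number $\tau$, and let $P_1'P_2'\dots P_N'$ be its conjugate billiard; indices are taken modulo $N$. Then: (i) If $N$ is even and $\tau$ is odd, the billiard is centrally symmetric with respect to $O$ (namely $P_{i+N/2}$ is the reflection of $P_i$ in $O$). (ii) If $N=2n+1$ is odd and $\tau$ is odd, the billiard is centrally symmetric with respect to $O$ to its conjugate billiard, with $P_i$ corresponding to $P'_{i+n}$, i.e. $P'_{i+n}=-P_i$ for all $i$. (iii) If $N=2n+1$ is odd and $\tau$ is even, the conjugate billiard coincides with the original one, and $P_i=P'_{i+n}$ for all $i$.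
   Context: A billiard in $e$ with caustic $c$ is a sequence $(P_i)_{i\in\mathbb Z}$ of points of $e$ with $P_{i+1}\neq P_i$ such that every line $[P_i,P_{i+1}]$ is tangent to $c$ and $[P_{i-1},P_i]\neq[P_i,P_{i+1}]$; it is $N$-sided periodic if $P_{i+N}=P_i$ for all $i$, $N$ being the least such positive integer. The vertices are traversed counterclockwise. Let $Q_i$ be the contact point of $[P_i,P_{i+1}]$ with $c$. With $\alpha(x,y)=(\frac{a_e}{a_c}x,\frac{b_e}{b_c}y)$ (so $\alpha(c)=e$), the conjugate billiard is the billiard in $e$ with caustic $c$ with vertices $P_i'=\alpha(Q_i)$. The signed exterior angle $\theta_i$ at $P_i$ is the signed angle from the direction of $P_{i-1}P_i$ to the direction of $P_iP_{i+1}$; for a periodic billiard $\sum_{i=1}^N\theta_i=2\tau\pi$ with $\tau\in\mathbb N$, called the turning number (the number of loops around $O$). *)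

theory Defs
  imports "HOL-Analysis.Analysis"
begin

text \<open>Points of the plane are represented as complex numbers; O is the origin.\<close>

definition on_ellipse :: "real \<Rightarrow> real \<Rightarrow> complex \<Rightarrow> bool" where
  "on_ellipse a b z \<longleftrightarrow> (Re z)\<^sup>2 / a\<^sup>2 + (Im z)\<^sup>2 / b\<^sup>2 = 1"

definition line_thru :: "complex \<Rightarrow> complex \<Rightarrow> complex set" where
  "line_thru P R = {P + complex_of_real t * (R - P) | t. True}"

definition tangent_to :: "real \<Rightarrow> real \<Rightarrow> complex \<Rightarrow> complex \<Rightarrow> bool" where
  "tangent_to a b P R \<longleftrightarrow> (\<exists>!Q. Q \<in> line_thru P R \<and> on_ellipse a b Q)"

definition contact_point :: "real \<Rightarrow> real \<Rightarrow> complex \<Rightarrow> complex \<Rightarrow> complex" where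
  "contact_point a b P R = (THE Q. Q \<in> line_thru P R \<and> on_ellipse a b Q)"

definition billiard :: "real \<Rightarrow> real \<Rightarrow> real \<Rightarrow> real \<Rightarrow> (int \<Rightarrow> complex) \<Rightarrow> bool" where
  "billiard ae be ac bc P \<longleftrightarrow>
     (\<forall>i. on_ellipse ae be (P i) \<and> P (i + 1) \<noteq> P i \<and> tangent_to ac bc (P i) (P (i + 1))
          \<and> line_thru (P (i - 1)) (P i) \<noteq> line_thru (P i) (P (i + 1)))"

definition counterclockwise :: "(int \<Rightarrow> complex) \<Rightarrow> bool" where
  "counterclockwise P \<longleftrightarrow> (\<forall>i. Im (cnj (P i) * P (i + 1)) > 0)"

definition least_period :: "(int \<Rightarrow> complex) \<Rightarrow> nat \<Rightarrow> bool" where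
  "least_period P N \<longleftrightarrow> N > 0 \<and> (\<forall>i. P (i + int N) = P i)
      \<and> (\<forall>m. 0 < m \<and> m < N \<longrightarrow> \<not> (\<forall>i. P (i + int m) = P i))"

definition periodic_billiard :: "real \<Rightarrow> real \<Rightarrow> real \<Rightarrow> real \<Rightarrow> (int \<Rightarrow> complex) \<Rightarrow> nat \<Rightarrow> bool" where
  "periodic_billiard ae be ac bc P N \<longleftrightarrow> billiard ae be ac bc P \<and> least_period P N"

text \<open>Signed exterior angle at P i, in (-pi, pi].\<close>
definition ext_angle :: "(int \<Rightarrow> complex) \<Rightarrow> int \<Rightarrow> real" where
  "ext_angle P i = Arg ((P (i + 1) - P i) / (P i - P (i - 1)))"

definition turning_number :: "(int \<Rightarrow> complex) \<Rightarrow> nat \<Rightarrow> nat \<Rightarrow> bool" where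
  "turning_number P N \<tau> \<longleftrightarrow> (\<Sum>i = 1..int N. ext_angle P i) = 2 * real \<tau> * pi"

definition alpha :: "real \<Rightarrow> real \<Rightarrow> real \<Rightarrow> real \<Rightarrow> complex \<Rightarrow> complex" where
  "alpha ae be ac bc z = Complex (ae / ac * Re z) (be / bc * Im z)"

definition conjugate_billiard :: "real \<Rightarrow> real \<Rightarrow> real \<Rightarrow> real \<Rightarrow> (int \<Rightarrow> complex) \<Rightarrow> int \<Rightarrow> complex" where
  "conjugate_billiard ae be ac bc P = (\<lambda>i. alpha ae be ac bc (contact_point ac bc (P i) (P (i + 1))))"

end

theory Submission
  imports Defs
begin

text \<open>In coordinates in which the caustic is the unit circle, the two tangents from a point
  of the table touch the circle at the polar angles \<open>\<theta> \<plusminus> \<gamma>\<close>, where \<open>\<theta>\<close> and \<open>r\<close> are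
  the polar angle and modulus of the point and \<open>\<gamma> = arccos (1 / r)\<close>. Taking the forward
  tangent defines a map \<open>H\<close> on parameters with \<open>H (t + \<pi>) = H t + \<pi>\<close>. Since incidence between parameters of
  the table and of the caustic is a symmetric relation, \<open>H\<close> sends a vertex to the next contact
  point and also a contact point to the next vertex. So the vertices have parameters
  \<open>(H \<circ> H)\<^sup>n x\<^sub>0\<close> and, by the choice of \<^const>\<open>alpha\<close>, the vertices of the
  conjugate billiard have their images under \<open>H\<close>. Measuring exterior angles by the polar angles
  of the edges shows that \<open>(H \<circ> H)\<^sup>N\<close> advances every vertex parameter by exactly
  \<open>2 \<tau> \<pi>\<close>. A strictly increasing map commuting with translation by \<open>\<pi>\<close> whose square
  moves a point by \<open>2 \<tau> \<pi>\<close> moves it by \<open>\<tau> \<pi>\<close>. Applied to \<open>(H \<circ> H)\<^bsup>N/2\<^esup>\<close>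
  for even \<open>N\<close> and to \<open>H\<^sup>N\<close> for odd \<open>N\<close>, this gives all three statements, because
  translating the parameter by \<open>\<pi>\<close> reflects the point in \<open>O\<close>. The argument uses only
  \<open>ac < ae\<close> and \<open>bc < be\<close>, not confocality.\<close>

section \<open>Lifts commuting with translation by \<open>\<pi>\<close>\<close>

definition pi_equivariant :: "(real \<Rightarrow> real) \<Rightarrow> bool" where
  "pi_equivariant f \<longleftrightarrow> (\<forall>x. f (x + pi) = f x + pi)"

lemma pi_equivariant_of_int:
  assumes "pi_equivariant f"
  shows "f (x + of_int k * pi) = f x + of_int k * pi"
proof (induction k rule: int_induct[where k = 0])
  case base
  show ?case by simp
next
  case (step1 i)
  have "f (x + of_int (i + 1) * pi) = f ((x + of_int i * pi) + pi)"
    by (simp add: algebra_simps)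
  also have "\<dots> = f (x + of_int i * pi) + pi"
    using assms by (simp add: pi_equivariant_def)
  finally show ?case using step1 by (simp add: algebra_simps)
next
  case (step2 i)
  have "f (x + of_int i * pi) = f ((x + of_int (i - 1) * pi) + pi)"
    by (simp add: algebra_simps)
  also have "\<dots> = f (x + of_int (i - 1) * pi) + pi"
    using assms by (simp add: pi_equivariant_def)
  finally show ?case using step2 by (simp add: algebra_simps)
qed

lemma pi_equivariant_funpow: "pi_equivariant f \<Longrightarrow> pi_equivariant (f ^^ n)"
  by (induction n) (simp_all add: pi_equivariant_def)

lemma strict_mono_funpow:
  fixes f :: "'a::order \<Rightarrow> 'a"
  shows "strict_mono f \<Longrightarrow> strict_mono (f ^^ n)"
  by (induction n) (auto simp: strict_mono_def)

lemma continuous_inj_pi_equivariant_imp_strict_mono: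
  fixes f :: "real \<Rightarrow> real"
  assumes cont: "continuous_on UNIV f" and "inj f" and equiv: "pi_equivariant f"
  shows "strict_mono f"
proof
  fix x y :: real
  assume "x < y"
  obtain n :: nat where "(y - x) / pi < n"
    using reals_Archimedean2 by blast
  then have y_less: "y < x + of_int (int n) * pi"
    by (simp add: field_simps)
  have f_shift: "f (x + of_int (int n) * pi) = f x + of_int (int n) * pi"
    using pi_equivariant_of_int[OF equiv] .
  have "f x < f y \<and> f y < f (x + of_int (int n) * pi)
      \<or> f (x + of_int (int n) * pi) < f y \<and> f y < f x"
    using continuous_inj_imp_mono[OF \<open>x < y\<close> y_less continuous_on_subset[OF cont]
        inj_on_subset[OF \<open>inj f\<close>]] by blast
  moreover have "0 < of_int (int n) * pi"
    using \<open>x < y\<close> y_less by linarith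
  ultimately show "f x < f y"
    using f_shift by linarith
qed

text \<open>If the second iterate of a lift is the translation by \<open>2 p \<pi>\<close> at \<open>z\<close>, the lift itself
  translates \<open>z\<close> by \<open>p \<pi>\<close>: otherwise monotonicity and equivariance would push \<open>g (g z)\<close> strictly
  to one side of \<open>z + 2 p \<pi>\<close>.\<close>
lemma pi_equivariant_half_shift:
  assumes "strict_mono g" and equiv: "pi_equivariant g"
    and twice: "g (g z) = z + 2 * of_int p * pi"
  shows "g z = z + of_int p * pi"
proof (rule ccontr)
  have shift: "g (z + of_int p * pi) = g z + of_int p * pi"
    using pi_equivariant_of_int[OF equiv] .
  assume "g z \<noteq> z + of_int p * pi"
  then consider "g z < z + of_int p * pi" | "z + of_int p * pi < g z"
    by linarith
  then show False
  proof cases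
    case 1
    then have "g (g z) < g (z + of_int p * pi)"
      by (rule strict_monoD[OF \<open>strict_mono g\<close>])
    with shift twice 1 show False by linarith
  next
    case 2
    then have "g (z + of_int p * pi) < g (g z)"
      by (rule strict_monoD[OF \<open>strict_mono g\<close>])
    with shift twice 2 show False by linarith
  qed
qed

section \<open>Parametrised ellipses\<close>

definition ellipse_point :: "real \<Rightarrow> real \<Rightarrow> real \<Rightarrow> complex" where
  "ellipse_point a b t = Complex (a * cos t) (b * sin t)"

text \<open>A continuous lift of the argument of \<^term>\<open>ellipse_point a b t\<close>.\<close>
definition ellipse_angle :: "real \<Rightarrow> real \<Rightarrow> real \<Rightarrow> real" where
  "ellipse_angle a b t = t + arctan ((b - a) * sin t * cos t / (a * (cos t)\<^sup>2 + b * (sin t)\<^sup>2))"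

lemma weighted_cos_sin_square_pos:
  fixes a b t :: real
  assumes "0 < a" "0 < b"
  shows "0 < a * (cos t)\<^sup>2 + b * (sin t)\<^sup>2"
proof (cases "cos t = 0")
  case True
  then have "(sin t)\<^sup>2 = 1" using sin_cos_squared_add[of t] by simp
  with True assms show ?thesis by simp
next
  case False
  with assms show ?thesis by (simp add: add_pos_nonneg)
qed

lemma continuous_on_ellipse_point: "continuous_on S (ellipse_point a b)"
  unfolding ellipse_point_def[abs_def] Complex_eq by (intro continuous_intros)

lemma ellipse_point_shift_pi: "ellipse_point a b (t + pi) = - ellipse_point a b t"
  by (simp add: ellipse_point_def complex_eq_iff)

lemma ellipse_point_shift_nat_pi:
  "ellipse_point a b (t + real k * pi) = (- 1) ^ k * ellipse_point a b t"
proof (induction k)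
  case (Suc k)
  have "ellipse_point a b (t + real (Suc k) * pi) = ellipse_point a b ((t + real k * pi) + pi)"
    by (simp add: algebra_simps)
  with Suc show ?case by (simp add: ellipse_point_shift_pi)
qed simp

lemma ellipse_point_shift_2pi: "ellipse_point a b (t + 2 * pi * of_int n) = ellipse_point a b t"
  using sin_cos_eq_iff[of "t + 2 * pi * of_int n" t] by (auto simp: ellipse_point_def)

lemma ellipse_point_eqE:
  assumes "a \<noteq> 0" "b \<noteq> 0" "ellipse_point a b s = ellipse_point a b t"
  obtains n :: int where "s = t + 2 * pi * n"
  using assms sin_cos_eq_iff[of s t] by (auto simp: ellipse_point_def complex_eq_iff)

lemma on_ellipseE:
  assumes "0 < a" "0 < b" "on_ellipse a b z"
  obtains t where "z = ellipse_point a b t"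
proof -
  have "(Re z / a)\<^sup>2 + (Im z / b)\<^sup>2 = 1"
    using assms by (simp add: on_ellipse_def power_divide)
  then obtain t where "Re z / a = cos t" "Im z / b = sin t"
    using sincos_total_2pi by metis
  with assms have "z = ellipse_point a b t"
    by (simp add: ellipse_point_def complex_eq_iff field_simps)
  then show thesis by (rule that)
qed

lemma on_ellipse_ellipse_point: "a \<noteq> 0 \<Longrightarrow> b \<noteq> 0 \<Longrightarrow> on_ellipse a b (ellipse_point a b t)"
  by (simp add: on_ellipse_def ellipse_point_def power_mult_distrib)

lemma ellipse_point_1_1: "ellipse_point 1 1 t = cis t"
  by (simp add: ellipse_point_def complex_eq_iff)

lemma alpha_ellipse_point:
  "ac \<noteq> 0 \<Longrightarrow> bc \<noteq> 0 \<Longrightarrow> alpha ae be ac bc (ellipse_point ac bc t) = ellipse_point ae be t"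
  by (simp add: alpha_def ellipse_point_def)

lemma ellipse_point_polar:
  assumes "0 < a" "0 < b"
  shows "ellipse_point a b t = rcis (cmod (ellipse_point a b t)) (ellipse_angle a b t)"
proof -
  define w where "w = Complex (a * (cos t)\<^sup>2 + b * (sin t)\<^sup>2) ((b - a) * sin t * cos t)"
  have rotate: "ellipse_point a b t = cis t * w"
    unfolding complex_eq_iff using sin_cos_squared_add3[of t]
    by (simp add: ellipse_point_def w_def; algebra)
  have "Arg w = arctan (Im w / Re w)"
    by (rule arg_conv_arctan) (simp add: w_def weighted_cos_sin_square_pos assms)
  then have "ellipse_angle a b t = t + Arg w"
    by (simp add: ellipse_angle_def w_def)
  moreover have "cmod (ellipse_point a b t) = cmod w"
    by (simp add: rotate norm_mult)
  ultimately show ?thesis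
    by (simp add: rotate rcis_def cis_mult[symmetric] rcis_cmod_Arg[of w, unfolded rcis_def])
qed

lemma ellipse_point_nonzero:
  assumes "0 < a" "0 < b"
  shows "ellipse_point a b t \<noteq> 0"
proof -
  have "cos t \<noteq> 0 \<or> sin t \<noteq> 0"
    using sin_cos_squared_add[of t] by (auto simp del: sin_cos_squared_add)
  with assms show ?thesis
    by (auto simp: ellipse_point_def complex_eq_iff)
qed

lemma pi_equivariant_ellipse_angle: "pi_equivariant (ellipse_angle a b)"
  by (simp add: pi_equivariant_def ellipse_angle_def)

lemma ellipse_angle_bound: "\<bar>ellipse_angle a b t - t\<bar> < pi / 2"
proof -
  define z where "z = (b - a) * sin t * cos t / (a * (cos t)\<^sup>2 + b * (sin t)\<^sup>2)"
  have "ellipse_angle a b t - t = arctan z"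
    by (simp add: ellipse_angle_def z_def)
  with arctan_bounded[of z] show ?thesis
    unfolding abs_less_iff by linarith
qed

lemma continuous_ellipse_angle:
  assumes "0 < a" "0 < b"
  shows "continuous_on UNIV (ellipse_angle a b)"
proof -
  have "a * (cos t)\<^sup>2 + b * (sin t)\<^sup>2 \<noteq> 0" for t
    using weighted_cos_sin_square_pos[OF assms] by (metis less_irrefl)
  then show ?thesis
    unfolding ellipse_angle_def[abs_def] by (intro continuous_intros) auto
qed

lemma inj_ellipse_angle:
  assumes pos: "0 < a" "0 < b"
  shows "inj (ellipse_angle a b)"
proof (rule injI)
  fix x y
  assume same_angle: "ellipse_angle a b x = ellipse_angle a b y"
  define rx where "rx = cmod (ellipse_point a b x)"
  define ry where "ry = cmod (ellipse_point a b y)"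
  define l where "l = ry / rx"
  have "0 < rx" "0 < ry"
    using ellipse_point_nonzero[OF pos] by (simp_all add: rx_def ry_def)
  then have "0 < l"
    by (simp add: l_def)
  have "ellipse_point a b y = of_real ry * cis (ellipse_angle a b x)"
    using ellipse_point_polar[OF pos, of y] by (simp add: ry_def same_angle rcis_def)
  also have "\<dots> = of_real l * (of_real rx * cis (ellipse_angle a b x))"
    using \<open>0 < rx\<close> by (simp add: l_def)
  also have "of_real rx * cis (ellipse_angle a b x) = ellipse_point a b x"
    using ellipse_point_polar[OF pos, of x] by (simp add: rx_def rcis_def)
  finally have "ellipse_point a b y = of_real l * ellipse_point a b x" .
  then have cos_y: "cos y = l * cos x" and sin_y: "sin y = l * sin x"
    using pos by (simp_all add: ellipse_point_def complex_eq_iff)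
  have "1 = (sin y)\<^sup>2 + (cos y)\<^sup>2"
    by simp
  also have "\<dots> = l\<^sup>2 * ((sin x)\<^sup>2 + (cos x)\<^sup>2)"
    unfolding sin_y cos_y by (simp only: power_mult_distrib distrib_left)
  finally have "l = 1"
    using \<open>0 < l\<close> by (simp add: power2_eq_1_iff)
  then obtain n :: int where n: "y = x + 2 * pi * n"
    using cos_y sin_y sin_cos_eq_iff by auto
  have "ellipse_angle a b y = ellipse_angle a b x + of_int (2 * n) * pi"
    using pi_equivariant_of_int[OF pi_equivariant_ellipse_angle[of a b], of x "2 * n"]
    by (simp add: n algebra_simps)
  with same_angle have "n = 0"
    by simp
  with n show "x = y"
    by simp
qed

lemma strict_mono_ellipse_angle: "0 < a \<Longrightarrow> 0 < b \<Longrightarrow> strict_mono (ellipse_angle a b)"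
  by (intro continuous_inj_pi_equivariant_imp_strict_mono continuous_ellipse_angle inj_ellipse_angle
      pi_equivariant_ellipse_angle)

section \<open>Tangents from an ellipse to the unit circle\<close>

text \<open>Multiplying by \<^term>\<open>cnj (cis \<phi>)\<close> rotates the tangent to the unit circle at \<^term>\<open>cis \<phi>\<close>
  onto the vertical line \<open>Re = 1\<close>; the imaginary part is then the signed distance from the
  contact point, positive in the counterclockwise direction.\<close>
definition on_tangent :: "real \<Rightarrow> real \<Rightarrow> real \<Rightarrow> real \<Rightarrow> bool" where
  "on_tangent A B x \<phi> \<longleftrightarrow> Re (cnj (cis \<phi>) * ellipse_point A B x) = 1"

definition tangent_coord :: "real \<Rightarrow> real \<Rightarrow> real \<Rightarrow> real \<Rightarrow> real" where
  "tangent_coord A B x \<phi> = Im (cnj (cis \<phi>) * ellipse_point A B x)"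

text \<open>For \<open>1 < A\<close> and \<open>1 < B\<close> the point \<^term>\<open>ellipse_point A B t\<close> lies outside the unit
  circle, and its two tangents to the circle touch it at the polar angles
  \<open>ellipse_angle A B t \<plusminus> tangent_half_angle A B t\<close>.\<close>
definition tangent_half_angle :: "real \<Rightarrow> real \<Rightarrow> real \<Rightarrow> real" where
  "tangent_half_angle A B t = arccos (1 / cmod (ellipse_point A B t))"

definition forward_contact :: "real \<Rightarrow> real \<Rightarrow> real \<Rightarrow> real" where
  "forward_contact A B t = ellipse_angle A B t + tangent_half_angle A B t"

lemma cnj_cis_mult_ellipse_point:
  "cnj (cis \<phi>) * ellipse_point A B x
    = Complex (A * cos x * cos \<phi> + B * sin x * sin \<phi>) (B * sin x * cos \<phi> - A * cos x * sin \<phi>)"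
  by (simp add: ellipse_point_def complex_eq_iff algebra_simps)

lemma on_tangent_commute: "on_tangent A B x \<phi> \<longleftrightarrow> on_tangent A B \<phi> x"
  by (simp add: on_tangent_def cnj_cis_mult_ellipse_point mult_ac)

lemma on_tangent_point:
  assumes "on_tangent A B x \<phi>"
  shows "ellipse_point A B x = cis \<phi> * Complex 1 (tangent_coord A B x \<phi>)"
proof -
  have "cnj (cis \<phi>) * ellipse_point A B x = Complex 1 (tangent_coord A B x \<phi>)"
    using assms by (simp add: on_tangent_def tangent_coord_def complex_eq_iff)
  then have "cis \<phi> * (cnj (cis \<phi>) * ellipse_point A B x)
      = cis \<phi> * Complex 1 (tangent_coord A B x \<phi>)"
    by simp
  then show ?thesis
    by (simp add: cis_cnj mult.assoc[symmetric] cis_mult)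
qed

lemma im_cnj_mult_tangent_points:
  "Im (cnj (cis \<phi> * Complex 1 s) * (cis \<phi> * Complex 1 t)) = t - s"
proof -
  have unit: "cnj (cis \<phi>) * cis \<phi> = 1"
    by (simp add: cis_cnj cis_mult)
  have "Im (cnj (cis \<phi> * Complex 1 s) * (cis \<phi> * Complex 1 t))
      = Im ((cnj (cis \<phi>) * cis \<phi>) * (cnj (Complex 1 s) * Complex 1 t))"
    by (simp only: complex_cnj_mult mult_ac)
  also have "\<dots> = Im (cnj (Complex 1 s) * Complex 1 t)"
    by (simp only: unit mult_1_left)
  also have "\<dots> = t - s"
    by simp
  finally show ?thesis .
qed

lemma cnj_cis_mult_ellipse_point_polar:
  assumes "0 < A" "0 < B"
  shows "cnj (cis \<phi>) * ellipse_point A B x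
    = rcis (cmod (ellipse_point A B x)) (ellipse_angle A B x - \<phi>)"
proof -
  have "ellipse_point A B x = rcis (cmod (ellipse_point A B x)) (ellipse_angle A B x)"
    by (rule ellipse_point_polar[OF assms])
  then show ?thesis
    by (metis cis_cnj cis_mult diff_conv_add_uminus mult.left_commute rcis_def add.commute)
qed

lemma norm_ellipse_point_gt_1:
  assumes "1 < A" "1 < B"
  shows "1 < cmod (ellipse_point A B t)"
proof -
  have "0 < (A\<^sup>2 - 1) * (cos t)\<^sup>2 + (B\<^sup>2 - 1) * (sin t)\<^sup>2"
    using assms by (intro weighted_cos_sin_square_pos) (simp_all add: one_less_power)
  then have "1\<^sup>2 < (cmod (ellipse_point A B t))\<^sup>2"
    using sin_cos_squared_add[of t]
    by (simp add: cmod_power2 ellipse_point_def power_mult_distrib algebra_simps)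
  then show ?thesis
    by (rule power_less_imp_less_base) simp
qed

lemma tangent_half_angle:
  assumes "1 < A" "1 < B"
  shows "0 < tangent_half_angle A B t" and "tangent_half_angle A B t < pi / 2"
    and "cos (tangent_half_angle A B t) = 1 / cmod (ellipse_point A B t)"
    and "0 < sin (tangent_half_angle A B t)"
proof -
  define r where "r = cmod (ellipse_point A B t)"
  define y where "y = 1 / r"
  have "1 < r"
    unfolding r_def by (rule norm_ellipse_point_gt_1[OF assms])
  then have y: "0 < y" "y < 1"
    by (simp_all add: y_def)
  have \<gamma>: "tangent_half_angle A B t = arccos y"
    by (simp add: tangent_half_angle_def y_def r_def)
  show "0 < tangent_half_angle A B t"
    using arccos_lt_bounded[of y] y by (simp add: \<gamma>)
  show "tangent_half_angle A B t < pi / 2"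
    using arccos_less_arccos[of 0 y] y by (simp add: \<gamma>)
  show "cos (tangent_half_angle A B t) = 1 / cmod (ellipse_point A B t)"
    using y by (simp add: \<gamma> cos_arccos y_def[symmetric] r_def[symmetric])
  have "y\<^sup>2 < 1"
    using y by (simp add: power_less_one_iff)
  then show "0 < sin (tangent_half_angle A B t)"
    using y by (simp add: \<gamma> sin_arccos)
qed

lemma on_tangent_polar:
  assumes gt1: "1 < A" "1 < B" and "on_tangent A B x \<phi>"
  shows "cos (ellipse_angle A B x - \<phi>) = cos (tangent_half_angle A B x)"
    and "tangent_coord A B x \<phi> = cmod (ellipse_point A B x) * sin (ellipse_angle A B x - \<phi>)"
proof -
  define r where "r = cmod (ellipse_point A B x)"
  have "1 < r"
    using norm_ellipse_point_gt_1[OF gt1] by (simp add: r_def)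
  have rotated: "cnj (cis \<phi>) * ellipse_point A B x = rcis r (ellipse_angle A B x - \<phi>)"
    using cnj_cis_mult_ellipse_point_polar gt1 by (simp add: r_def)
  have "r * cos (ellipse_angle A B x - \<phi>) = 1"
    using \<open>on_tangent A B x \<phi>\<close> by (simp add: on_tangent_def rotated)
  moreover have "cos (tangent_half_angle A B x) = 1 / r"
    using tangent_half_angle(3)[OF gt1, of x] by (simp add: r_def)
  then have "r * cos (tangent_half_angle A B x) = 1"
    using \<open>1 < r\<close> by simp
  ultimately show "cos (ellipse_angle A B x - \<phi>) = cos (tangent_half_angle A B x)"
    using \<open>1 < r\<close> by (metis mult_cancel_left not_one_less_zero)
  show "tangent_coord A B x \<phi> = r * sin (ellipse_angle A B x - \<phi>)"
    by (simp add: tangent_coord_def rotated)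
qed

lemma on_tangent_cases:
  assumes gt1: "1 < A" "1 < B" and "on_tangent A B x \<phi>"
  shows "tangent_coord A B x \<phi> < 0 \<Longrightarrow> \<exists>k::int. \<phi> = forward_contact A B x + 2 * pi * k"
    and "0 < tangent_coord A B x \<phi> \<Longrightarrow>
      \<exists>k::int. \<phi> = ellipse_angle A B x - tangent_half_angle A B x + 2 * pi * k"
proof -
  define \<delta> where "\<delta> = ellipse_angle A B x - \<phi>"
  define \<gamma> where "\<gamma> = tangent_half_angle A B x"
  have cos_\<delta>: "cos \<delta> = cos \<gamma>"
    using on_tangent_polar(1)[OF assms] by (simp add: \<delta>_def \<gamma>_def)
  have "0 < cmod (ellipse_point A B x)"
    using norm_ellipse_point_gt_1[OF gt1, of x] by linarith
  then have sign: "tangent_coord A B x \<phi> < 0 \<longleftrightarrow> sin \<delta> < 0"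
    "0 < tangent_coord A B x \<phi> \<longleftrightarrow> 0 < sin \<delta>"
    using on_tangent_polar(2)[OF assms]
    by (simp_all add: \<delta>_def mult_less_0_iff zero_less_mult_iff)
  from cos_\<delta> have "(sin \<delta>)\<^sup>2 = (sin \<gamma>)\<^sup>2"
    by (simp add: sin_squared_eq)
  moreover have "0 < sin \<gamma>"
    using tangent_half_angle(4)[OF gt1] by (simp add: \<gamma>_def)
  ultimately have sin_\<delta>: "sin \<delta> = sin \<gamma> \<or> sin \<delta> = sin (- \<gamma>)"
    by (simp add: power2_eq_iff)
  show "\<exists>k::int. \<phi> = forward_contact A B x + 2 * pi * k" if "tangent_coord A B x \<phi> < 0"
  proof -
    have "sin \<delta> = sin (- \<gamma>) \<and> cos \<delta> = cos (- \<gamma>)"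
      using that sign sin_\<delta> cos_\<delta> \<open>0 < sin \<gamma>\<close> by auto
    then obtain n :: int where "\<delta> = - \<gamma> + 2 * pi * n"
      using sin_cos_eq_iff by blast
    then have "\<phi> = forward_contact A B x + 2 * pi * of_int (- n)"
      by (simp add: \<delta>_def \<gamma>_def forward_contact_def)
    then show ?thesis by blast
  qed
  show "\<exists>k::int. \<phi> = ellipse_angle A B x - tangent_half_angle A B x + 2 * pi * k"
    if "0 < tangent_coord A B x \<phi>"
  proof -
    have "sin \<delta> = sin \<gamma> \<and> cos \<delta> = cos \<gamma>"
      using that sign sin_\<delta> cos_\<delta> \<open>0 < sin \<gamma>\<close> by auto
    then obtain n :: int where "\<delta> = \<gamma> + 2 * pi * n"
      using sin_cos_eq_iff by blast
    then have "\<phi> = ellipse_angle A B x - tangent_half_angle A B x + 2 * pi * of_int (- n)"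
      by (simp add: \<delta>_def \<gamma>_def)
    then show ?thesis by blast
  qed
qed

lemma on_tangent_forward_contact:
  assumes gt1: "1 < A" "1 < B"
  shows "on_tangent A B x (forward_contact A B x)"
    and "tangent_coord A B x (forward_contact A B x) < 0"
proof -
  define r where "r = cmod (ellipse_point A B x)"
  define \<gamma> where "\<gamma> = tangent_half_angle A B x"
  have "1 < r"
    using norm_ellipse_point_gt_1[OF gt1] by (simp add: r_def)
  have rotated: "cnj (cis (forward_contact A B x)) * ellipse_point A B x = rcis r (- \<gamma>)"
    using cnj_cis_mult_ellipse_point_polar gt1 by (simp add: r_def \<gamma>_def forward_contact_def)
  have "cos \<gamma> = 1 / r"
    using tangent_half_angle(3)[OF gt1, of x] by (simp add: \<gamma>_def r_def)
  with \<open>1 < r\<close> show "on_tangent A B x (forward_contact A B x)"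
    by (simp add: on_tangent_def rotated)
  show "tangent_coord A B x (forward_contact A B x) < 0"
    using tangent_half_angle(4)[OF gt1, of x] \<open>1 < r\<close>
    by (simp add: tangent_coord_def rotated \<gamma>_def mult_pos_neg)
qed

lemma sum_square_lt_1_if_mult_nonpos:
  fixes A B p q :: real
  assumes "1 < A" "1 < B" and line: "A * p + B * q = 1"
    and "p\<^sup>2 + q\<^sup>2 \<le> 1" and "p * q \<le> 0"
  shows "(p + q)\<^sup>2 < 1"
proof (cases "p * q = 0")
  case True
  then have "p = 0 \<and> q = 1 / B \<or> q = 0 \<and> p = 1 / A"
    using line assms(1,2) by (auto simp: field_simps)
  with assms(1,2) show ?thesis
    by (auto simp: power_divide power_one_over less_divide_eq)
next
  case False
  with \<open>p * q \<le> 0\<close> have "p * q < 0"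
    by linarith
  with \<open>p\<^sup>2 + q\<^sup>2 \<le> 1\<close> show ?thesis
    by (simp add: power2_sum)
qed

lemma weighted_quadratic_form_pos:
  fixes A B p q :: real
  assumes gt1: "1 < A" "1 < B" and line: "A * p + B * q = 1" and "p\<^sup>2 + q\<^sup>2 \<le> 1"
  shows "0 < A * B * (1 - (p + q)\<^sup>2) - (A - B)\<^sup>2 * (p * q)"
proof (cases "0 < p * q")
  case True
  then have "0 < p \<and> 0 < q \<or> p < 0 \<and> q < 0"
    by (simp add: zero_less_mult_iff)
  moreover have "\<not> (p < 0 \<and> q < 0)"
  proof
    assume "p < 0 \<and> q < 0"
    then have "A * p < 0" "B * q < 0"
      using gt1 by (simp_all add: mult_pos_neg)
    with line show False
      by linarith
  qed
  ultimately have "0 < p" "0 < q"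
    by auto
  text \<open>Homogenising with \<open>A p + B q = 1\<close> makes the form factor.\<close>
  have "A * B * (1 - (p + q)\<^sup>2) - (A - B)\<^sup>2 * (p * q)
      = A * B * ((A * p + B * q)\<^sup>2 - (p + q)\<^sup>2) - (A - B)\<^sup>2 * (p * q)"
    by (simp add: line)
  also have "\<dots> = (A * p + B * q) * (B * (A\<^sup>2 - 1) * p + A * (B\<^sup>2 - 1) * q)"
    by (simp add: power2_eq_square algebra_simps)
  also have "\<dots> = B * (A\<^sup>2 - 1) * p + A * (B\<^sup>2 - 1) * q"
    by (simp add: line)
  finally show ?thesis
    using gt1 \<open>0 < p\<close> \<open>0 < q\<close> by (simp add: add_pos_pos one_less_power)
next
  case False
  then have "(p + q)\<^sup>2 < 1"
    using sum_square_lt_1_if_mult_nonpos[OF gt1 line] \<open>p\<^sup>2 + q\<^sup>2 \<le> 1\<close> by simp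
  then have "0 < A * B * (1 - (p + q)\<^sup>2)"
    using gt1 by simp
  moreover have "(A - B)\<^sup>2 * (p * q) \<le> 0"
    using False by (simp add: mult_nonneg_nonpos)
  ultimately show ?thesis
    by linarith
qed

lemma weighted_cross_product_pos:
  fixes A B a b c d :: real
  assumes gt1: "1 < A" "1 < B" and unit: "a\<^sup>2 + b\<^sup>2 = 1" "c\<^sup>2 + d\<^sup>2 = 1"
    and tangent: "A * a * c + B * b * d = 1"
  shows "0 < (A * a * d - B * b * c) * (B * a * d - A * b * c)"
proof -
  define p q where "p = a * c" and "q = b * d"
  have "(a * d - b * c)\<^sup>2 + (p + q)\<^sup>2 = (a\<^sup>2 + b\<^sup>2) * (c\<^sup>2 + d\<^sup>2)"
    by (simp add: p_def q_def power2_eq_square algebra_simps)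
  then have lagrange: "(a * d - b * c)\<^sup>2 = 1 - (p + q)\<^sup>2"
    using unit by simp
  have "(A * a * d - B * b * c) * (B * a * d - A * b * c)
      = A * B * (a * d - b * c)\<^sup>2 - (A - B)\<^sup>2 * (p * q)"
    by (simp add: p_def q_def power2_eq_square algebra_simps)
  also have "\<dots> = A * B * (1 - (p + q)\<^sup>2) - (A - B)\<^sup>2 * (p * q)"
    by (simp only: lagrange)
  finally have expand: "(A * a * d - B * b * c) * (B * a * d - A * b * c)
      = A * B * (1 - (p + q)\<^sup>2) - (A - B)\<^sup>2 * (p * q)" .
  have "c\<^sup>2 \<le> 1" "d\<^sup>2 \<le> 1"
    using unit(2) zero_le_power2[of c] zero_le_power2[of d] by linarith+
  then have "p\<^sup>2 + q\<^sup>2 \<le> a\<^sup>2 + b\<^sup>2"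
    unfolding p_def q_def power_mult_distrib by (intro add_mono mult_left_le) simp_all
  moreover have "A * p + B * q = 1"
    using tangent by (simp add: p_def q_def mult.assoc)
  ultimately show ?thesis
    unfolding expand using weighted_quadratic_form_pos[OF gt1] unit by simp
qed

lemma tangent_coord_swap_mult_neg:
  assumes "1 < A" "1 < B" "on_tangent A B x \<phi>"
  shows "tangent_coord A B x \<phi> * tangent_coord A B \<phi> x < 0"
proof -
  have "0 < (A * cos x * sin \<phi> - B * sin x * cos \<phi>) * (B * cos x * sin \<phi> - A * sin x * cos \<phi>)"
    using assms by (intro weighted_cross_product_pos)
      (simp_all add: on_tangent_def cnj_cis_mult_ellipse_point mult_ac)
  then show ?thesis
    by (simp add: tangent_coord_def cnj_cis_mult_ellipse_point algebra_simps)
qed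

lemma forward_contact_bounds:
  assumes "1 < A" "1 < B"
  shows "- (pi / 2) < forward_contact A B t - t" and "forward_contact A B t - t < pi"
  using ellipse_angle_bound[of A B t, unfolded abs_less_iff] tangent_half_angle(1,2)[OF assms, of t]
  unfolding forward_contact_def by linarith+

text \<open>Seen from the contact point \<open>y = forward_contact A B x\<close>, the point \<open>x\<close> lies on the
  backward tangent, because \<^const>\<open>tangent_coord\<close> changes sign when \<open>x\<close> and \<open>y\<close> swap roles.\<close>
lemma backward_contact_forward_contact:
  assumes gt1: "1 < A" "1 < B"
  shows "ellipse_angle A B (forward_contact A B x)
    - tangent_half_angle A B (forward_contact A B x) = x"
proof -
  define y where "y = forward_contact A B x"
  have "on_tangent A B y x"
    using on_tangent_forward_contact(1)[OF gt1] on_tangent_commute by (simp add: y_def)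
  moreover have "0 < tangent_coord A B y x"
    using tangent_coord_swap_mult_neg[OF gt1 on_tangent_forward_contact(1)[OF gt1, of x]]
      on_tangent_forward_contact(2)[OF gt1, of x]
    by (simp add: y_def mult_less_0_iff)
  ultimately obtain k :: int
    where k: "x = ellipse_angle A B y - tangent_half_angle A B y + 2 * pi * k"
    using on_tangent_cases(2)[OF gt1] by blast
  have "- (pi / 2) < forward_contact A B y - y" "forward_contact A B y - y < pi"
    "- (pi / 2) < y - x" "y - x < pi"
    using forward_contact_bounds[OF gt1] by (auto simp: y_def)
  moreover have "0 < tangent_half_angle A B y" "tangent_half_angle A B y < pi / 2"
    using tangent_half_angle(1,2)[OF gt1] by auto
  moreover have "forward_contact A B y - x = 2 * tangent_half_angle A B y - 2 * pi * k"
    using k by (simp add: forward_contact_def)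
  ultimately have "pi * of_int k < pi * 1" "pi * (- 1) < pi * of_int k"
    by linarith+
  then have "of_int k < (1::real)" "(- 1::real) < of_int k"
    by (simp_all only: mult_less_cancel_left_pos[OF pi_gt_zero])
  then have "k = 0"
    by linarith
  with k show ?thesis
    by (simp add: y_def)
qed

lemma inj_forward_contact: "1 < A \<Longrightarrow> 1 < B \<Longrightarrow> inj (forward_contact A B)"
  by (metis backward_contact_forward_contact injI)

lemma continuous_forward_contact:
  assumes "1 < A" "1 < B"
  shows "continuous_on UNIV (forward_contact A B)"
proof -
  have r: "1 < cmod (ellipse_point A B t)" for t
    by (rule norm_ellipse_point_gt_1[OF assms])
  have "cmod (ellipse_point A B t) \<noteq> 0" and "-1 \<le> 1 / cmod (ellipse_point A B t)"
    and "1 / cmod (ellipse_point A B t) \<le> 1" for t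
    using r[of t] by (auto simp: divide_le_eq_1 intro: order.trans[of _ 0])
  then have "continuous_on UNIV (\<lambda>t. arccos (1 / cmod (ellipse_point A B t)))"
    by (intro continuous_on_arccos continuous_intros continuous_on_ellipse_point) auto
  with assms show ?thesis
    unfolding forward_contact_def[abs_def] tangent_half_angle_def
    by (intro continuous_on_add continuous_ellipse_angle) auto
qed

lemma pi_equivariant_forward_contact: "pi_equivariant (forward_contact A B)"
  using pi_equivariant_ellipse_angle[of A B]
  by (simp add: pi_equivariant_def forward_contact_def tangent_half_angle_def
      ellipse_point_shift_pi)

lemma strict_mono_forward_contact: "1 < A \<Longrightarrow> 1 < B \<Longrightarrow> strict_mono (forward_contact A B)"
  by (intro continuous_inj_pi_equivariant_imp_strict_mono continuous_forward_contact
      inj_forward_contact pi_equivariant_forward_contact)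

lemma forward_contact_twice_bounds:
  assumes "1 < A" "1 < B"
  shows "x < forward_contact A B (forward_contact A B x)"
    and "forward_contact A B (forward_contact A B x) < x + pi"
  using backward_contact_forward_contact[OF assms, of x]
    tangent_half_angle(1,2)[OF assms, of "forward_contact A B x"]
  by (simp_all add: forward_contact_def[of A B "forward_contact A B x"])

section \<open>Lines tangent to the caustic\<close>

lemma line_touching_unit_sphere:
  fixes p w :: "'a::real_inner"
  assumes "w \<noteq> 0" and on_sphere: "norm (p + s *\<^sub>R w) = 1"
    and unique: "\<And>t. norm (p + t *\<^sub>R w) = 1 \<Longrightarrow> t = s"
  shows "inner (p + s *\<^sub>R w) w = 0" and "inner (p + s *\<^sub>R w) p = 1"
proof -
  define q where "q = p + s *\<^sub>R w"
  have qq: "inner q q = 1"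
    using on_sphere by (simp add: q_def norm_eq_1)
  show orth: "inner q w = 0"
  proof (rule ccontr)
    assume "inner q w \<noteq> 0"
    text \<open>Reflecting \<open>q\<close> in the hyperplane through the centre orthogonal to \<open>w\<close> gives a
      second point of the line on the sphere.\<close>
    define \<delta> where "\<delta> = - 2 * inner q w / inner w w"
    have "inner w w \<noteq> 0"
      using \<open>w \<noteq> 0\<close> by simp
    then have "2 * inner q w + \<delta> * inner w w = 0"
      by (simp add: \<delta>_def)
    have "p + (s + \<delta>) *\<^sub>R w = q + \<delta> *\<^sub>R w"
      by (simp add: q_def scaleR_add_left)
    moreover have "inner (q + \<delta> *\<^sub>R w) (q + \<delta> *\<^sub>R w)
        = inner q q + \<delta> * (2 * inner q w + \<delta> * inner w w)"
      by (simp add: inner_add_left inner_add_right inner_commute algebra_simps)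
    ultimately have "norm (p + (s + \<delta>) *\<^sub>R w) = 1"
      using qq \<open>2 * inner q w + \<delta> * inner w w = 0\<close> by (simp add: norm_eq_1)
    then have "s + \<delta> = s"
      by (rule unique)
    with \<open>inner w w \<noteq> 0\<close> \<open>inner q w \<noteq> 0\<close> show False
      by (simp add: \<delta>_def)
  qed
  have "inner q p = inner q q - s * inner q w"
    by (simp add: q_def inner_add_right inner_diff_right algebra_simps)
  with qq orth show "inner q p = 1"
    by simp
qed

definition unscale :: "real \<Rightarrow> real \<Rightarrow> complex \<Rightarrow> complex" where
  "unscale a b z = Complex (Re z / a) (Im z / b)"

lemma unscale_line:
  "unscale a b (P + of_real t * (R - P)) = unscale a b P + t *\<^sub>R (unscale a b R - unscale a b P)"
  by (simp add: unscale_def complex_eq_iff scaleR_conv_of_real diff_divide_distrib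
      add_divide_distrib algebra_simps)

lemma unscale_diff: "unscale a b (z - w) = unscale a b z - unscale a b w"
  by (simp add: unscale_def complex_eq_iff diff_divide_distrib)

lemma unscale_of_real_mult: "unscale a b (of_real t * z) = of_real t * unscale a b z"
  by (simp add: unscale_def complex_eq_iff)

lemma unscale_eq_iff: "a \<noteq> 0 \<Longrightarrow> b \<noteq> 0 \<Longrightarrow> unscale a b z = unscale a b w \<longleftrightarrow> z = w"
  by (simp add: unscale_def complex_eq_iff)

lemma unscale_ellipse_point:
  "a \<noteq> 0 \<Longrightarrow> b \<noteq> 0 \<Longrightarrow> unscale a b (ellipse_point c d t) = ellipse_point (c / a) (d / b) t"
  by (simp add: unscale_def ellipse_point_def)

lemma on_ellipse_unscale:
  "a \<noteq> 0 \<Longrightarrow> b \<noteq> 0 \<Longrightarrow> on_ellipse (c / a) (d / b) (unscale a b z) \<longleftrightarrow> on_ellipse c d z"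
  by (simp add: on_ellipse_def unscale_def power_divide)

lemma on_ellipse_1_1: "on_ellipse 1 1 z \<longleftrightarrow> cmod z = 1"
  by (simp add: on_ellipse_def cmod_def)

lemma im_cnj_mult_unscale:
  "a \<noteq> 0 \<Longrightarrow> b \<noteq> 0 \<Longrightarrow> Im (cnj z * w) = a * b * Im (cnj (unscale a b z) * unscale a b w)"
  by (simp add: unscale_def field_simps)

lemma re_cnj_mult_eq_inner: "Re (cnj u * z) = inner u z"
  by (simp add: inner_complex_def)

lemma unscaled_tangent_points:
  assumes nz: "a \<noteq> 0" "b \<noteq> 0"
    and P: "unscale a b P = cis \<phi> * Complex 1 s" and R: "unscale a b R = cis \<phi> * Complex 1 t"
  shows "Im (cnj P * R) = a * b * (t - s)"
    and "R - P = of_real (t - s) * ellipse_point a b (\<phi> + pi / 2)"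
proof -
  show "Im (cnj P * R) = a * b * (t - s)"
    using im_cnj_mult_unscale[OF nz, of P R] unfolding P R im_cnj_mult_tangent_points .
  have "unscale a b (R - P) = unscale a b (of_real (t - s) * ellipse_point a b (\<phi> + pi / 2))"
    using nz
    by (simp add: unscale_diff unscale_of_real_mult P R unscale_ellipse_point ellipse_point_1_1
        cis_mult[symmetric] complex_eq_iff algebra_simps)
  then show "R - P = of_real (t - s) * ellipse_point a b (\<phi> + pi / 2)"
    using nz by (simp add: unscale_eq_iff)
qed

lemma tangent_to_unscale:
  assumes pos: "0 < a" "0 < b" and "tangent_to a b P R" and "R \<noteq> P"
  defines "q \<equiv> unscale a b (contact_point a b P R)"
  shows "cmod q = 1" and "inner q (unscale a b P) = 1" and "inner q (unscale a b R) = 1"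
proof -
  have unit: "on_ellipse a b z \<longleftrightarrow> cmod (unscale a b z) = 1" for z
    using on_ellipse_unscale[of a b a b z] pos by (simp add: on_ellipse_1_1)
  have ex1: "\<exists>!Q. Q \<in> line_thru P R \<and> on_ellipse a b Q"
    using \<open>tangent_to a b P R\<close> by (simp add: tangent_to_def)
  then obtain Q where Q: "Q \<in> line_thru P R" "on_ellipse a b Q"
    and uniq: "\<And>Q'. Q' \<in> line_thru P R \<Longrightarrow> on_ellipse a b Q' \<Longrightarrow> Q' = Q"
    by blast
  have "contact_point a b P R = Q"
    unfolding contact_point_def using ex1 Q by (blast intro: the1_equality)
  obtain s where Q_eq: "Q = P + of_real s * (R - P)"
    using Q(1) by (auto simp: line_thru_def)
  define p where "p = unscale a b P"
  define w where "w = unscale a b R - p"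
  have w: "w \<noteq> 0"
    using \<open>R \<noteq> P\<close> pos unscale_eq_iff[of a b R P] by (simp add: w_def p_def)
  have line: "unscale a b (P + of_real t * (R - P)) = p + t *\<^sub>R w" for t
    by (simp add: unscale_line p_def w_def)
  have q: "q = p + s *\<^sub>R w"
    by (simp add: q_def \<open>contact_point a b P R = Q\<close> Q_eq line)
  have uniq_s: "t = s" if "norm (p + t *\<^sub>R w) = 1" for t
  proof -
    have "P + of_real t * (R - P) = Q"
      using that by (intro uniq) (auto simp: line_thru_def unit line)
    with \<open>R \<noteq> P\<close> show "t = s"
      by (simp add: Q_eq)
  qed
  have on_unit: "norm (p + s *\<^sub>R w) = 1"
    using Q(2) by (simp add: unit Q_eq line)
  then show "cmod q = 1"
    by (simp add: q)
  have "inner q w = 0" "inner q p = 1"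
    using line_touching_unit_sphere[OF w on_unit uniq_s] by (simp_all add: q)
  then show "inner q (unscale a b P) = 1" "inner q (unscale a b R) = 1"
    by (simp_all add: p_def[symmetric] w_def inner_diff_right)
qed

lemma tangent_to_contact_point:
  assumes pos: "0 < a" "0 < b" and "tangent_to a b P R" and "R \<noteq> P"
  obtains \<phi> where "contact_point a b P R = ellipse_point a b \<phi>"
    and "Re (cnj (cis \<phi>) * unscale a b P) = 1" and "Re (cnj (cis \<phi>) * unscale a b R) = 1"
proof -
  define q where "q = unscale a b (contact_point a b P R)"
  note tangent = tangent_to_unscale[OF assms, folded q_def]
  define \<phi> where "\<phi> = Arg q"
  have "q \<noteq> 0"
    using tangent(1) by auto
  with tangent(1) have q_cis: "q = cis \<phi>"
    by (simp add: \<phi>_def cis_Arg sgn_eq)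
  then have "unscale a b (contact_point a b P R) = unscale a b (ellipse_point a b \<phi>)"
    using pos by (simp add: q_def unscale_ellipse_point ellipse_point_1_1)
  then have "contact_point a b P R = ellipse_point a b \<phi>"
    using pos by (simp add: unscale_eq_iff)
  with tangent(2,3) show thesis
    by (intro that[of \<phi>]) (simp_all only: re_cnj_mult_eq_inner q_cis[symmetric])
qed

text \<open>A chord of the outer ellipse along a tangent of the unit circle has its endpoints on
  opposite sides of the contact point: in the tangent coordinate the endpoints are the roots of a
  quadratic whose value at the contact point, which lies inside the ellipse, is negative.\<close>
lemma tangent_chord_sides:
  fixes A B s1 s2 \<phi> :: real
  assumes gt1: "1 < A" "1 < B" and "s1 < s2"
    and on1: "on_ellipse A B (cis \<phi> * Complex 1 s1)"
    and on2: "on_ellipse A B (cis \<phi> * Complex 1 s2)"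
  shows "s1 < 0 \<and> 0 < s2"
proof -
  define c d where "c = cos \<phi>" and "d = sin \<phi>"
  have cd: "c\<^sup>2 + d\<^sup>2 = 1"
    by (simp add: c_def d_def)
  define \<alpha> \<beta> \<gamma>
    where "\<alpha> = d\<^sup>2 / A\<^sup>2 + c\<^sup>2 / B\<^sup>2" and "\<beta> = 2 * c * d * (1 / B\<^sup>2 - 1 / A\<^sup>2)"
      and "\<gamma> = c\<^sup>2 / A\<^sup>2 + d\<^sup>2 / B\<^sup>2 - 1"
  have quadratic: "on_ellipse A B (cis \<phi> * Complex 1 s) \<longleftrightarrow> \<alpha> * s\<^sup>2 + \<beta> * s + \<gamma> = 0" for s
  proof -
    have "(Re (cis \<phi> * Complex 1 s))\<^sup>2 / A\<^sup>2 + (Im (cis \<phi> * Complex 1 s))\<^sup>2 / B\<^sup>2 - 1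
        = \<alpha> * s\<^sup>2 + \<beta> * s + \<gamma>"
      using gt1 by (simp add: \<alpha>_def \<beta>_def \<gamma>_def c_def d_def field_simps power2_eq_square)
    then show ?thesis
      unfolding on_ellipse_def by linarith
  qed
  have root1: "\<alpha> * s1\<^sup>2 + \<beta> * s1 + \<gamma> = 0" and root2: "\<alpha> * s2\<^sup>2 + \<beta> * s2 + \<gamma> = 0"
    using on1 on2 by (simp_all add: quadratic)
  have "(s1 - s2) * (\<alpha> * (s1 + s2) + \<beta>) = 0"
    using root1 root2 by (simp add: power2_eq_square algebra_simps)
  with \<open>s1 < s2\<close> have "\<beta> = - \<alpha> * (s1 + s2)"
    by simp
  with root1 have vieta: "\<gamma> = \<alpha> * (s1 * s2)"
    by (simp add: power2_eq_square algebra_simps)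
  have A2: "1 < A\<^sup>2" "1 < B\<^sup>2"
    using gt1 by (simp_all add: one_less_power)
  have "0 < \<alpha>"
    using gt1 A2 weighted_cos_sin_square_pos[of "1 / B\<^sup>2" "1 / A\<^sup>2" \<phi>]
    by (simp add: \<alpha>_def c_def d_def add.commute)
  have "0 < (1 - 1 / A\<^sup>2) * c\<^sup>2 + (1 - 1 / B\<^sup>2) * d\<^sup>2"
    unfolding c_def d_def using A2
    by (intro weighted_cos_sin_square_pos) (simp_all add: divide_less_eq_1)
  then have "\<gamma> < 0"
    using cd by (simp add: \<gamma>_def algebra_simps)
  with vieta \<open>0 < \<alpha>\<close> have "s1 * s2 < 0"
    by (simp add: mult_less_0_iff)
  with \<open>s1 < s2\<close> show ?thesis
    by (auto simp: mult_less_0_iff)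
qed

section \<open>The billiard map\<close>

locale nested_ellipses =
  fixes ae be ac bc :: real
  assumes caustic_pos: "0 < ac" "0 < bc" and caustic_inside: "ac < ae" "bc < be"
begin

lemma axis_ratios_gt_1: "1 < ae / ac" "1 < be / bc"
  using caustic_pos caustic_inside by simp_all

lemma table_pos: "0 < ae" "0 < be"
  using caustic_pos caustic_inside by simp_all

text \<open>The map \<open>H\<close>: after \<^term>\<open>unscale ac bc\<close> the caustic is the unit circle and the table
  the ellipse with semi-axes \<^term>\<open>ae / ac\<close>, \<^term>\<open>be / bc\<close>.\<close>
definition contact_map :: "real \<Rightarrow> real" where
  "contact_map = forward_contact (ae / ac) (be / bc)"

text \<open>The polar angle of \<^term>\<open>ellipse_point ac bc (t + pi / 2)\<close>, the direction of the tangent to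
  the caustic at \<^term>\<open>ellipse_point ac bc t\<close>.\<close>
definition edge_angle :: "real \<Rightarrow> real" where
  "edge_angle t = ellipse_angle ac bc (t + pi / 2)"

lemma strict_mono_contact_map: "strict_mono contact_map"
  using strict_mono_forward_contact[OF axis_ratios_gt_1] by (simp add: contact_map_def)

lemma pi_equivariant_contact_map: "pi_equivariant contact_map"
  by (simp add: contact_map_def pi_equivariant_forward_contact)

lemma contact_map_twice_bounds:
  "x < contact_map (contact_map x)" "contact_map (contact_map x) < x + pi"
  using forward_contact_twice_bounds[OF axis_ratios_gt_1] by (simp_all add: contact_map_def)

lemma strict_mono_edge_angle: "strict_mono edge_angle"
  using strict_mono_ellipse_angle[OF caustic_pos]
  by (simp add: strict_mono_def edge_angle_def)

lemma pi_equivariant_edge_angle: "pi_equivariant edge_angle"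
  unfolding pi_equivariant_def edge_angle_def
proof
  fix x
  have "ellipse_angle ac bc ((x + pi / 2) + pi) = ellipse_angle ac bc (x + pi / 2) + pi"
    using pi_equivariant_ellipse_angle[of ac bc] unfolding pi_equivariant_def by blast
  moreover have "x + pi + pi / 2 = (x + pi / 2) + pi"
    by simp
  ultimately show "ellipse_angle ac bc (x + pi + pi / 2) = ellipse_angle ac bc (x + pi / 2) + pi"
    by metis
qed

lemma tangent_chord:
  assumes P: "P = ellipse_point ae be x" and "on_ellipse ae be R" "R \<noteq> P"
    and "tangent_to ac bc P R" and ccw: "0 < Im (cnj P * R)"
  obtains \<phi> y where "contact_point ac bc P R = ellipse_point ac bc \<phi>" "R = ellipse_point ae be y"
    "on_tangent (ae / ac) (be / bc) x \<phi>" "on_tangent (ae / ac) (be / bc) y \<phi>"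
    "tangent_coord (ae / ac) (be / bc) x \<phi> < 0" "0 < tangent_coord (ae / ac) (be / bc) y \<phi>"
    "\<exists>\<mu>>0. R - P = of_real \<mu> * ellipse_point ac bc (\<phi> + pi / 2)"
proof -
  define A B where "A = ae / ac" and "B = be / bc"
  have nz: "ac \<noteq> 0" "bc \<noteq> 0" "A \<noteq> 0" "B \<noteq> 0"
    using caustic_pos axis_ratios_gt_1 by (simp_all add: A_def B_def)
  obtain y where R: "R = ellipse_point ae be y"
    using on_ellipseE[OF table_pos \<open>on_ellipse ae be R\<close>] .
  obtain \<phi> where contact: "contact_point ac bc P R = ellipse_point ac bc \<phi>"
    and "Re (cnj (cis \<phi>) * unscale ac bc P) = 1" "Re (cnj (cis \<phi>) * unscale ac bc R) = 1"
    using tangent_to_contact_point[OF caustic_pos \<open>tangent_to ac bc P R\<close> \<open>R \<noteq> P\<close>] .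
  moreover have unscale_P: "unscale ac bc P = ellipse_point A B x"
    and unscale_R: "unscale ac bc R = ellipse_point A B y"
    using nz by (simp_all add: P R unscale_ellipse_point A_def B_def)
  ultimately have tangent: "on_tangent A B x \<phi>" "on_tangent A B y \<phi>"
    by (simp_all add: on_tangent_def)
  define s1 s2 where "s1 = tangent_coord A B x \<phi>" and "s2 = tangent_coord A B y \<phi>"
  have p: "unscale ac bc P = cis \<phi> * Complex 1 s1" and r: "unscale ac bc R = cis \<phi> * Complex 1 s2"
    using on_tangent_point[OF tangent(1)] on_tangent_point[OF tangent(2)]
    by (simp_all add: unscale_P unscale_R s1_def s2_def)
  have "0 < ac * bc * (s2 - s1)"
    using ccw unscaled_tangent_points(1)[OF nz(1,2) p r] by simp
  then have "s1 < s2"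
    using caustic_pos by (simp add: zero_less_mult_iff mult_less_0_iff)
  moreover have "on_ellipse A B (cis \<phi> * Complex 1 s1)" "on_ellipse A B (cis \<phi> * Complex 1 s2)"
    using on_ellipse_ellipse_point[OF nz(3,4)] unscale_P unscale_R p r by metis+
  ultimately have sides: "s1 < 0" "0 < s2"
    using tangent_chord_sides[OF axis_ratios_gt_1[folded A_def B_def]] by blast+
  have "\<exists>\<mu>>0. R - P = of_real \<mu> * ellipse_point ac bc (\<phi> + pi / 2)"
    using sides unscaled_tangent_points(2)[OF nz(1,2) p r] by (intro exI[of _ "s2 - s1"]) simp
  with contact R tangent sides show thesis
    by (intro that) (simp_all add: A_def B_def s1_def s2_def)
qed

lemma billiard_step:
  assumes "P = ellipse_point ae be x" and "on_ellipse ae be R" "R \<noteq> P"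
    and "tangent_to ac bc P R" and "0 < Im (cnj P * R)"
  shows "contact_point ac bc P R = ellipse_point ac bc (contact_map x)"
    and "R = ellipse_point ae be (contact_map (contact_map x))"
    and "\<exists>\<mu>>0. R - P = of_real \<mu> * ellipse_point ac bc (contact_map x + pi / 2)"
proof -
  note gt1 = axis_ratios_gt_1
  obtain \<phi> y where contact: "contact_point ac bc P R = ellipse_point ac bc \<phi>"
    and R: "R = ellipse_point ae be y"
    and tangent: "on_tangent (ae / ac) (be / bc) x \<phi>" "on_tangent (ae / ac) (be / bc) y \<phi>"
    and sides: "tangent_coord (ae / ac) (be / bc) x \<phi> < 0"
      "0 < tangent_coord (ae / ac) (be / bc) y \<phi>"
    and edge: "\<exists>\<mu>>0. R - P = of_real \<mu> * ellipse_point ac bc (\<phi> + pi / 2)"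
    using tangent_chord[OF assms] .
  obtain k :: int where k: "\<phi> = contact_map x + 2 * pi * k"
    using on_tangent_cases(1)[OF gt1 tangent(1) sides(1)] by (auto simp: contact_map_def)
  have "on_tangent (ae / ac) (be / bc) \<phi> y"
    using tangent(2) on_tangent_commute by blast
  moreover have "tangent_coord (ae / ac) (be / bc) \<phi> y < 0"
    using tangent_coord_swap_mult_neg[OF gt1 tangent(2)] sides(2) by (simp add: mult_less_0_iff)
  ultimately obtain k' :: int where k': "y = contact_map \<phi> + 2 * pi * k'"
    using on_tangent_cases(1)[OF gt1] by (auto simp: contact_map_def)
  have "contact_map \<phi> = contact_map (contact_map x) + 2 * pi * of_int k"
    using pi_equivariant_of_int[OF pi_equivariant_contact_map, of "contact_map x" "2 * k"]
    by (simp add: k algebra_simps)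
  then have "y = contact_map (contact_map x) + 2 * pi * of_int (k + k')"
    by (simp add: k' algebra_simps)
  then show "R = ellipse_point ae be (contact_map (contact_map x))"
    using ellipse_point_shift_2pi[of ae be "contact_map (contact_map x)" "k + k'"] by (simp add: R)
  show "contact_point ac bc P R = ellipse_point ac bc (contact_map x)"
    by (simp add: contact k ellipse_point_shift_2pi)
  have "ellipse_point ac bc (\<phi> + pi / 2) = ellipse_point ac bc (contact_map x + pi / 2)"
    using ellipse_point_shift_2pi[of ac bc "contact_map x + pi / 2" k]
    by (simp add: k algebra_simps)
  with edge show "\<exists>\<mu>>0. R - P = of_real \<mu> * ellipse_point ac bc (contact_map x + pi / 2)"
    by simp
qed

lemma edge_angle_step:
  "edge_angle t < edge_angle (contact_map (contact_map t))"
  "edge_angle (contact_map (contact_map t)) < edge_angle t + pi"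
proof -
  show "edge_angle t < edge_angle (contact_map (contact_map t))"
    using contact_map_twice_bounds(1) strict_mono_edge_angle by (rule strict_monoD[rotated])
  have "edge_angle (contact_map (contact_map t)) < edge_angle (t + pi)"
    using contact_map_twice_bounds(2) strict_mono_edge_angle by (rule strict_monoD[rotated])
  then show "edge_angle (contact_map (contact_map t)) < edge_angle t + pi"
    using pi_equivariant_edge_angle by (simp add: pi_equivariant_def)
qed

end

section \<open>Periodic billiards\<close>

lemma Arg_rcis_divide:
  assumes "0 < r" "0 < s" "- pi < b - a" "b - a \<le> pi"
  shows "Arg (rcis r b / rcis s a) = b - a"
  using assms by (simp add: rcis_divide Arg_rcis)

lemma periodic_int_multiple:
  assumes "\<And>i. f (i + int N) = f i"
  shows "f (i + int N * q) = f i"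
proof (induction q rule: int_induct[where k = 0])
  case base
  show ?case by simp
next
  case (step1 q)
  show ?case using assms[of "i + int N * q"] step1 by (simp add: algebra_simps)
next
  case (step2 q)
  show ?case using assms[of "i + int N * (q - 1)"] step2 by (simp add: algebra_simps)
qed

lemma periodic_eqI:
  assumes "0 < N" and "\<And>i. f (i + int N) = f i" and "\<And>i. g (i + int N) = g i"
    and on_nat: "\<And>n. f (int n) = g (int n)"
  shows "f i = g i"
proof -
  define n where "n = nat (i mod int N)"
  have i: "i = int n + int N * (i div int N)"
    using \<open>0 < N\<close> by (simp add: n_def)
  show ?thesis
    by (subst (1 2) i) (simp add: periodic_int_multiple assms(2,3) on_nat)
qed

locale periodic_billiard_orbit = nested_ellipses +
  fixes P :: "int \<Rightarrow> complex" and N \<tau> :: nat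
  assumes periodic: "periodic_billiard ae be ac bc P N"
    and ccw: "counterclockwise P"
    and turning: "turning_number P N \<tau>"
begin

lemma period: "0 < N" "P (i + int N) = P i"
  using periodic by (simp_all add: periodic_billiard_def least_period_def)

lemma billiard_edge:
  "on_ellipse ae be (P i)" "P (i + 1) \<noteq> P i" "tangent_to ac bc (P i) (P (i + 1))"
  "0 < Im (cnj (P i) * P (i + 1))"
  using periodic ccw by (simp_all add: periodic_billiard_def billiard_def counterclockwise_def)

definition start :: real where
  "start = (SOME x. P 0 = ellipse_point ae be x)"

definition vertex_param :: "nat \<Rightarrow> real" where
  "vertex_param n = (contact_map ^^ (2 * n)) start"

lemma vertex_param_Suc: "vertex_param (Suc n) = contact_map (contact_map (vertex_param n))"
  by (simp add: vertex_param_def)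

lemma vertex_param_add: "vertex_param (m + n) = (contact_map ^^ (2 * m)) (vertex_param n)"
  by (simp add: vertex_param_def distrib_left funpow_add)

definition contact_param :: "nat \<Rightarrow> real" where
  "contact_param n = contact_map (vertex_param n)"

lemma contact_param_Suc: "contact_param (Suc n) = contact_map (contact_map (contact_param n))"
  by (simp add: contact_param_def vertex_param_Suc)

lemma vertex_ellipse_point: "P (int n) = ellipse_point ae be (vertex_param n)"
proof (induction n)
  case 0
  have "on_ellipse ae be (P 0)"
    using periodic by (simp add: periodic_billiard_def billiard_def)
  then obtain x where "P 0 = ellipse_point ae be x"
    using on_ellipseE[OF table_pos] by blast
  then have "P 0 = ellipse_point ae be start"
    unfolding start_def by (rule someI)
  then show ?case
    by (simp add: vertex_param_def)
next
  case (Suc n)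
  have "P (int n + 1) = ellipse_point ae be (vertex_param (Suc n))"
    unfolding vertex_param_Suc by (rule billiard_step(2)[OF Suc.IH billiard_edge])
  then show ?case
    by (simp add: add.commute)
qed

lemma orbit_step:
  "contact_point ac bc (P (int n)) (P (int n + 1)) = ellipse_point ac bc (contact_param n)"
  "\<exists>\<mu>>0. P (int n + 1) - P (int n) = of_real \<mu> * ellipse_point ac bc (contact_param n + pi / 2)"
  using billiard_step[OF vertex_ellipse_point[of n] billiard_edge]
  by (simp_all add: contact_param_def)

lemma edge_polar:
  obtains r where "0 < r"
    and "P (int n + 1) - P (int n) = rcis r (edge_angle (contact_param n))"
proof -
  obtain \<mu> where "0 < \<mu>"
    and edge: "P (int n + 1) - P (int n)
      = of_real \<mu> * ellipse_point ac bc (contact_param n + pi / 2)"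
    using orbit_step(2) by blast
  define z where "z = ellipse_point ac bc (contact_param n + pi / 2)"
  have "z = rcis (cmod z) (edge_angle (contact_param n))"
    unfolding z_def edge_angle_def by (rule ellipse_point_polar[OF caustic_pos])
  then have "P (int n + 1) - P (int n) = rcis (\<mu> * cmod z) (edge_angle (contact_param n))"
    by (metis edge z_def rcis_def mult.assoc of_real_mult)
  moreover have "0 < \<mu> * cmod z"
    using \<open>0 < \<mu>\<close> ellipse_point_nonzero[OF caustic_pos] by (simp add: z_def)
  ultimately show thesis
    using that by blast
qed

lemma ext_angle_orbit:
  "ext_angle P (int n + 1)
    = edge_angle (contact_param (Suc n)) - edge_angle (contact_param n)"
proof -
  obtain r0 where "0 < r0"
    and r0: "P (int n + 1) - P (int n) = rcis r0 (edge_angle (contact_param n))"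
    using edge_polar .
  obtain r1 where "0 < r1"
    and r1: "P (int (Suc n) + 1) - P (int (Suc n)) = rcis r1 (edge_angle (contact_param (Suc n)))"
    using edge_polar .
  have "0 < edge_angle (contact_param (Suc n)) - edge_angle (contact_param n)"
    "edge_angle (contact_param (Suc n)) - edge_angle (contact_param n) < pi"
    using edge_angle_step[of "contact_param n"] by (simp_all add: contact_param_Suc)
  moreover have "ext_angle P (int n + 1)
      = Arg ((P (int (Suc n) + 1) - P (int (Suc n))) / (P (int n + 1) - P (int n)))"
    by (simp add: ext_angle_def add.commute)
  ultimately show ?thesis
    using \<open>0 < r0\<close> \<open>0 < r1\<close> r1 by (simp add: r0 Arg_rcis_divide)
qed

lemma sum_ext_angle_orbit:
  "(\<Sum>i = 1..int n. ext_angle P i)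
    = edge_angle (contact_param n) - edge_angle (contact_param 0)"
proof (induction n)
  case (Suc n)
  have "{1..int (Suc n)} = insert (int n + 1) {1..int n}"
    by auto
  then have "(\<Sum>i = 1..int (Suc n). ext_angle P i)
      = ext_angle P (int n + 1) + (\<Sum>i = 1..int n. ext_angle P i)"
    by simp
  with Suc show ?case
    by (simp add: ext_angle_orbit)
qed simp

text \<open>Closing the orbit after \<open>N\<close> bounces advances the parameter by a multiple of \<open>2 \<pi>\<close>, and
  the total turning of the edge directions equals that advance, so it is \<open>2 \<tau> \<pi>\<close>.\<close>
lemma vertex_param_period: "vertex_param N = start + 2 * real \<tau> * pi"
proof -
  have "ellipse_point ae be (vertex_param N) = ellipse_point ae be start"
    using vertex_ellipse_point[of N] vertex_ellipse_point[of 0] period(2)[of 0]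
    by (simp add: vertex_param_def)
  moreover have "ae \<noteq> 0" "be \<noteq> 0"
    using table_pos by simp_all
  ultimately obtain p :: int where p: "vertex_param N = start + 2 * pi * p"
    using ellipse_point_eqE by metis
  have shift: "contact_param N = contact_map start + of_int (2 * p) * pi"
    using pi_equivariant_of_int[OF pi_equivariant_contact_map, of start "2 * p"]
    by (simp add: contact_param_def p algebra_simps)
  have "edge_angle (contact_param N) = edge_angle (contact_map start) + of_int (2 * p) * pi"
    unfolding shift
    by (rule pi_equivariant_of_int[OF pi_equivariant_edge_angle])
  then have "2 * real \<tau> * pi = 2 * of_int p * pi"
    using turning sum_ext_angle_orbit[of N]
    by (simp add: turning_number_def contact_param_def vertex_param_def)
  then have "real \<tau> = of_int p"
    by simp
  with p show ?thesis
    by simp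
qed

lemma vertex_param_add_period: "vertex_param (j + N) = vertex_param j + 2 * real \<tau> * pi"
proof -
  have "(contact_map ^^ (2 * j)) (start + 2 * real \<tau> * pi)
      = (contact_map ^^ (2 * j)) start + 2 * real \<tau> * pi"
    using pi_equivariant_of_int[OF pi_equivariant_funpow[OF pi_equivariant_contact_map],
        of "2 * j" start "2 * int \<tau>"]
    by simp
  then show ?thesis
    by (simp only: vertex_param_add vertex_param_period) (simp add: vertex_param_def)
qed

lemma contact_map_iterate_half_period:
  assumes "k + k = 2 * N"
  shows "(contact_map ^^ k) (vertex_param j) = vertex_param j + real \<tau> * pi"
proof -
  have "(contact_map ^^ k) ((contact_map ^^ k) (vertex_param j))
      = (contact_map ^^ (k + k)) (vertex_param j)"
    by (simp add: funpow_add)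
  also have "\<dots> = vertex_param (N + j)"
    by (simp add: assms vertex_param_add)
  also have "\<dots> = vertex_param j + 2 * of_int (int \<tau>) * pi"
    by (simp add: add.commute[of N] vertex_param_add_period)
  finally have "(contact_map ^^ k) ((contact_map ^^ k) (vertex_param j))
      = vertex_param j + 2 * of_int (int \<tau>) * pi"
    by simp
  from pi_equivariant_half_shift[OF strict_mono_funpow[OF strict_mono_contact_map]
      pi_equivariant_funpow[OF pi_equivariant_contact_map] this]
  show ?thesis
    by simp
qed

lemma vertices_half_turn:
  assumes "even N"
  shows "P (i + int (N div 2)) = (- 1) ^ \<tau> * P i"
proof (rule periodic_eqI[where f = "\<lambda>i. P (i + int (N div 2))", OF period(1)])
  show "P (i + int N + int (N div 2)) = P (i + int (N div 2))" for i
    using period(2)[of "i + int (N div 2)"] by (simp add: algebra_simps)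
  show "(- 1) ^ \<tau> * P (i + int N) = (- 1) ^ \<tau> * P i" for i
    by (simp add: period(2))
  fix j
  have "vertex_param (N div 2 + j) = (contact_map ^^ (2 * (N div 2))) (vertex_param j)"
    by (rule vertex_param_add)
  also have "\<dots> = vertex_param j + real \<tau> * pi"
    using assms by (intro contact_map_iterate_half_period) auto
  finally show "P (int j + int (N div 2)) = (- 1) ^ \<tau> * P (int j)"
    using vertex_ellipse_point[of "N div 2 + j"] vertex_ellipse_point[of j]
      ellipse_point_shift_nat_pi[of ae be "vertex_param j" \<tau>]
    by (simp add: add.commute)
qed

lemma conjugate_billiard_orbit:
  "conjugate_billiard ae be ac bc P (int j) = ellipse_point ae be (contact_param j)"
  using orbit_step(1)[of j] caustic_pos
  by (simp add: conjugate_billiard_def alpha_ellipse_point)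

lemma conjugate_half_turn:
  assumes "N = 2 * n + 1"
  shows "conjugate_billiard ae be ac bc P (i + int n) = (- 1) ^ \<tau> * P i"
proof (rule periodic_eqI[where f = "\<lambda>i. conjugate_billiard ae be ac bc P (i + int n)",
      OF period(1)])
  show "conjugate_billiard ae be ac bc P (i + int N + int n)
      = conjugate_billiard ae be ac bc P (i + int n)"
    for i
    using period(2)[of "i + int n"] period(2)[of "i + int n + 1"]
    by (simp add: conjugate_billiard_def algebra_simps)
  show "(- 1) ^ \<tau> * P (i + int N) = (- 1) ^ \<tau> * P i" for i
    by (simp add: period(2))
  fix j
  have "contact_param (n + j) = (contact_map ^^ N) (vertex_param j)"
    by (simp add: contact_param_def vertex_param_add assms)
  also have "\<dots> = vertex_param j + real \<tau> * pi"
    by (rule contact_map_iterate_half_period) simp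
  finally show "conjugate_billiard ae be ac bc P (int j + int n) = (- 1) ^ \<tau> * P (int j)"
    using conjugate_billiard_orbit[of "n + j"] vertex_ellipse_point[of j]
      ellipse_point_shift_nat_pi[of ae be "vertex_param j" \<tau>]
    by (simp add: add.commute)
qed

end

theorem corollary4p2:
  fixes ac bc ke ae be :: real and P :: "int \<Rightarrow> complex" and N \<tau> :: nat
  assumes "ac > bc" and "bc > 0" and "ke > 0"
    and "ae > 0" and "be > 0" and "ae\<^sup>2 = ac\<^sup>2 + ke" and "be\<^sup>2 = bc\<^sup>2 + ke"
    and "periodic_billiard ae be ac bc P N"
    and "counterclockwise P"
    and "turning_number P N \<tau>"
  shows "(even N \<and> odd \<tau> \<longrightarrow> (\<forall>i. P (i + int (N div 2)) = - P i))
    \<and> (\<forall>n. N = 2 * n + 1 \<and> odd \<tau> \<longrightarrow>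
          (\<forall>i. conjugate_billiard ae be ac bc P (i + int n) = - P i))
    \<and> (\<forall>n. N = 2 * n + 1 \<and> even \<tau> \<longrightarrow>
          (\<forall>i. P i = conjugate_billiard ae be ac bc P (i + int n)))"
proof -
  have "ac\<^sup>2 < ae\<^sup>2" "bc\<^sup>2 < be\<^sup>2"
    using assms(3,6,7) by simp_all
  then have "ac < ae" "bc < be"
    using assms(4,5) by (meson power2_less_imp_less less_imp_le)+
  then interpret periodic_billiard_orbit ae be ac bc P N \<tau>
    using assms by unfold_locales auto
  show ?thesis
    using vertices_half_turn conjugate_half_turn by auto
qed

end
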